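(* Let $A\in\mathbb{R}^{n\times n}$, $B\in\mathbb{R}^{n\times m}$, $C\in\mathbb{R}^{p\times n}$, $D\in\mathbb{R}^{p\times p}$ with $(A,B)$ reachable, $(C,A)$ observable, $BB^T\succ0$, $DD^T\succ0$. Fix $c>0$, and let $r^R_c$, $r$ and the sequence $(\overline{P}_t)_{t\ge0}$ be as in the context. Let $\tilde P_0\in\mathcal{P}$ with $\tilde P_0\succeq BB^T$ and define $\tilde P_{t+1}=r^R_c(\tilde P_t)$ for $t\ge0$. Then for every integer $q\ge 0$, $$\tilde P_t\succeq \overline{P}_q\qquad\text{for all } t\ge q.$$
   Context: $\mathcal{P}$ denotes the cone of $n\times n$ real symmetric positive definite matrices; $\succeq$ is the Loewner order; $\lambda_1(P)$ is the largest eigenvalue of $P$. For $P\in\mathcal{P}$ and $\theta$ with $I-\theta P\succ0$, let $\gamma(\theta,P)=\tfrac12\big[\log\det(I-\theta P)+\mathrm{tr}((I-\theta P)^{-1})-n\big]$. For $c>0$ and $P\in\mathcal{P}$, $\theta_c(P)$ denotes the unique $\theta\in(0,\lambda_1(P)^{-1})$ with $\gamma(\theta,P)=c$ (its existence and uniqueness are taken as given). Define $r^R_c(P)=A[P^{-1}+C^T(DD^T)^{-1}C-\theta_c(P)I_n]^{-1}A^T+BB^T$ and the Riccati map $r(P)=A[P^{-1}+C^T(DD^T)^{-1}C]^{-1}A^T+BB^T$. Let $\overline{P}_0=BB^T$ and $\overline{P}_{t+1}=r(\overline{P}_t)$ for $t\ge0$. *)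

theory Defs
  imports "HOL-Analysis.Analysis"
begin

text \<open>Matrices are Cartesian-type matrices: an r x s real matrix is real^'s^'r.\<close>

definition mpow :: "real^'n^'n \<Rightarrow> nat \<Rightarrow> real^'n^'n" where
  "mpow A k = ((\<lambda>M. A ** M) ^^ k) (mat 1)"

definition sym_mat :: "real^'n^'n \<Rightarrow> bool" where
  "sym_mat P \<longleftrightarrow> transpose P = P"

definition pos_def :: "real^'n^'n \<Rightarrow> bool" where
  "pos_def P \<longleftrightarrow> sym_mat P \<and> (\<forall>x. x \<noteq> 0 \<longrightarrow> x \<bullet> (P *v x) > 0)"

definition pos_semidef :: "real^'n^'n \<Rightarrow> bool" where
  "pos_semidef P \<longleftrightarrow> sym_mat P \<and> (\<forall>x. x \<bullet> (P *v x) \<ge> 0)"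

definition loewner_ge :: "real^'n^'n \<Rightarrow> real^'n^'n \<Rightarrow> bool" where
  "loewner_ge P Q \<longleftrightarrow> pos_semidef (P - Q)"

definition lambda_max :: "real^'n^'n \<Rightarrow> real" where
  "lambda_max P = Max {l. \<exists>v. v \<noteq> 0 \<and> P *v v = l *\<^sub>R v}"

definition gamma :: "real \<Rightarrow> real^'n^'n \<Rightarrow> real" where
  "gamma \<theta> P = (1/2) * (ln (det (mat 1 - \<theta> *\<^sub>R P))
      + trace (matrix_inv (mat 1 - \<theta> *\<^sub>R P)) - real CARD('n))"

definition theta_c :: "real \<Rightarrow> real^'n^'n \<Rightarrow> real" where
  "theta_c c P = (THE \<theta>. 0 < \<theta> \<and> \<theta> < inverse (lambda_max P) \<and> gamma \<theta> P = c)"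

definition riccati ::
  "real^'n^'n \<Rightarrow> real^'m^'n \<Rightarrow> real^'n^'p \<Rightarrow> real^'p^'p \<Rightarrow> real^'n^'n \<Rightarrow> real^'n^'n" where
  "riccati A B C D P = A ** matrix_inv (matrix_inv P
      + transpose C ** matrix_inv (D ** transpose D) ** C) ** transpose A + B ** transpose B"

definition riccati_R ::
  "real \<Rightarrow> real^'n^'n \<Rightarrow> real^'m^'n \<Rightarrow> real^'n^'p \<Rightarrow> real^'p^'p \<Rightarrow> real^'n^'n \<Rightarrow> real^'n^'n" where
  "riccati_R c A B C D P = A ** matrix_inv (matrix_inv P
      + transpose C ** matrix_inv (D ** transpose D) ** C - theta_c c P *\<^sub>R mat 1) ** transpose A
      + B ** transpose B"

text \<open>(A,B) reachable: the reachability matrix [B, AB, ..., A^(n-1) B] has rank n,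
  i.e. its columns span R^n.\<close>
definition reachable :: "real^'n^'n \<Rightarrow> real^'m^'n \<Rightarrow> bool" where
  "reachable A B \<longleftrightarrow>
     span (\<Union>k<CARD('n). columns (mpow A k ** B)) = (UNIV :: (real^'n) set)"

text \<open>(C,A) observable: the observability matrix [C; CA; ...; C A^(n-1)] has rank n,
  i.e. its rows span R^n.\<close>
definition observable :: "real^'n^'p \<Rightarrow> real^'n^'n \<Rightarrow> bool" where
  "observable C A \<longleftrightarrow>
     span (\<Union>k<CARD('n). rows (C ** mpow A k)) = (UNIV :: (real^'n) set)"

end

theory Submission
  imports Defs
begin

text \<open>The Riccati map r is monotone in the Loewner order: it is built from a congruence and
  two order-reversing matrix inversions. The risk-sensitive map dominates it pointwise: since
  0 < theta_c(P) < 1/lambda_1(P), the matrix P^-1 + C^T (DD^T)^-1 C - theta_c(P) I is still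
  positive definite but Loewner-smaller than P^-1 + C^T (DD^T)^-1 C, and inversion reverses the
  order. Hence every iterate satisfies P~_t >= BB^T = Pbar_0, and inductively
  P~_(t+1) >= r(P~_t) >= r(Pbar_q) = Pbar_(q+1).

  Bounding theta_c(P) is where the work lies, since theta_c is defined by a unique-root
  condition: in an orthonormal eigenbasis of P, gamma(theta, P) = 1/2 sum_i g(theta lambda_i)
  with g(x) = ln(1 - x) + 1/(1 - x) - 1, which is continuous, strictly increasing and unbounded
  on [0, 1), so gamma(., P) = c has exactly one root in (0, 1/lambda_1(P)).\<close>

section \<open>Symmetric matrices and the Loewner order\<close>

lemma inner_matrix_vector_transpose:
  "inner (x::real^'m) ((A::real^'n^'m) *v y) = inner (transpose A *v x) y"
  by (metis dot_lmul_matrix transpose_matrix_vector)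

lemma sym_mat_inner: "sym_mat P \<Longrightarrow> inner x (P *v y) = inner (P *v x) y"
  by (metis inner_matrix_vector_transpose sym_mat_def)

lemma matrix_inv_right: "invertible (M::real^'n^'n) \<Longrightarrow> M ** matrix_inv M = mat 1"
  and matrix_inv_left: "invertible (M::real^'n^'n) \<Longrightarrow> matrix_inv M ** M = mat 1"
  unfolding invertible_def matrix_inv_def by (metis (mono_tags, lifting) someI_ex)+

lemma matrix_inv_unique:
  assumes "(M::real^'n^'n) ** N = mat 1"
  shows "matrix_inv M = N"
proof -
  have "invertible M" using assms invertible_right_inverse by blast
  then have "matrix_inv M = matrix_inv M ** (M ** N)" using assms by simp
  also have "\<dots> = N" by (simp add: matrix_mul_assoc matrix_inv_left \<open>invertible M\<close>)
  finally show ?thesis .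
qed

lemma matrix_diff_ldistrib: "(A::real^'n^'m) ** ((X::real^'p^'n) - Y) = A ** X - A ** Y"
  and matrix_diff_rdistrib: "((U::real^'n^'m) - V) ** (B::real^'p^'n) = U ** B - V ** B"
  by (simp_all add: vec_eq_iff matrix_matrix_mult_def sum_subtractf left_diff_distrib right_diff_distrib)

lemma congruence_diff:
  "(A::real^'n^'m) ** (X - Y) ** transpose A = A ** X ** transpose A - A ** Y ** transpose A"
  by (simp add: matrix_diff_ldistrib matrix_diff_rdistrib)

lemma sym_mat_add: "sym_mat X \<Longrightarrow> sym_mat Y \<Longrightarrow> sym_mat (X + Y)"
  and sym_mat_diff: "sym_mat X \<Longrightarrow> sym_mat Y \<Longrightarrow> sym_mat (X - Y)"
  and sym_mat_scaleR: "sym_mat X \<Longrightarrow> sym_mat (a *\<^sub>R X)"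
  by (simp_all add: sym_mat_def transpose_def vec_eq_iff)

lemma sym_mat_mat: "sym_mat (mat a)"
  by (simp add: sym_mat_def)

lemma sym_mat_congruence: "sym_mat X \<Longrightarrow> sym_mat (A ** X ** transpose A)"
  by (simp add: sym_mat_def matrix_transpose_mul matrix_mul_assoc)

lemma sym_mat_matrix_inv:
  assumes "sym_mat (P::real^'n^'n)" and "invertible P"
  shows "sym_mat (matrix_inv P)"
proof -
  have "transpose (matrix_inv P) ** P = mat 1"
    using arg_cong[OF matrix_inv_right[OF assms(2)], of transpose] assms(1)
    by (simp add: matrix_transpose_mul sym_mat_def)
  then show ?thesis
    by (metis matrix_inv_unique matrix_left_right_inverse sym_mat_def)
qed

lemma inner_congruence:
  fixes A :: "real^'n^'m" and X :: "real^'n^'n"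
  shows "inner x ((A ** X ** transpose A) *v x) = inner (transpose A *v x) (X *v (transpose A *v x))"
proof -
  have "(A ** X ** transpose A) *v x = A *v (X *v (transpose A *v x))"
    by (simp only: matrix_vector_mul_assoc matrix_mul_assoc)
  then show ?thesis by (simp only: inner_matrix_vector_transpose[of x A])
qed

lemma pos_def_invertible:
  assumes "pos_def (P::real^'n^'n)"
  shows "invertible P"
proof -
  have "\<forall>x. P *v x = 0 \<longrightarrow> x = 0"
    using assms unfolding pos_def_def by (metis inner_zero_right less_irrefl)
  then show ?thesis using matrix_left_invertible_ker invertible_left_inverse by blast
qed

lemma pos_def_matrix_inv:
  assumes P: "pos_def (P::real^'n^'n)"
  shows "pos_def (matrix_inv P)"
  unfolding pos_def_def
proof (intro conjI allI impI)
  have inv: "invertible P" and sym: "sym_mat P"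
    using P pos_def_invertible pos_def_def by blast+
  show "sym_mat (matrix_inv P)" using sym inv by (rule sym_mat_matrix_inv)
  fix x :: "real^'n" assume "x \<noteq> 0"
  define y where "y = matrix_inv P *v x"
  have Py: "P *v y = x"
    unfolding y_def by (simp add: matrix_vector_mul_assoc matrix_inv_right[OF inv])
  with \<open>x \<noteq> 0\<close> have "y \<noteq> 0" by auto
  then have "0 < inner y (P *v y)" using P pos_def_def by blast
  also have "\<dots> = inner x (matrix_inv P *v x)"
    using sym_mat_inner[OF sym, of y y] Py y_def by (simp add: inner_commute)
  finally show "0 < inner x (matrix_inv P *v x)" .
qed

lemma pos_def_imp_pos_semidef: "pos_def X \<Longrightarrow> pos_semidef X"
  unfolding pos_semidef_def pos_def_def by (metis inner_zero_left order.refl order_less_le)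

lemma pos_semidef_add: "pos_semidef X \<Longrightarrow> pos_semidef Y \<Longrightarrow> pos_semidef (X + Y)"
  unfolding pos_semidef_def by (simp add: sym_mat_add matrix_vector_mult_add_rdistrib inner_add_right)

lemma pos_def_add_pos_semidef: "pos_def X \<Longrightarrow> pos_semidef Y \<Longrightarrow> pos_def (X + Y)"
  unfolding pos_semidef_def pos_def_def
  by (simp add: sym_mat_add matrix_vector_mult_add_rdistrib inner_add_right add_pos_nonneg)

lemma pos_semidef_congruence: "pos_semidef X \<Longrightarrow> pos_semidef (A ** X ** transpose A)"
  unfolding pos_semidef_def by (simp add: sym_mat_congruence inner_congruence)

lemma pos_semidef_scaled_id: "0 \<le> a \<Longrightarrow> pos_semidef (a *\<^sub>R (mat 1 :: real^'n^'n))"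
  unfolding pos_semidef_def
  by (simp add: sym_mat_scaleR sym_mat_mat scaleR_matrix_vector_assoc[symmetric])

lemma loewner_ge_trans: "loewner_ge P Q \<Longrightarrow> loewner_ge Q R \<Longrightarrow> loewner_ge P R"
  unfolding loewner_ge_def using pos_semidef_add[of "P - Q" "Q - R"] by simp

lemma loewner_ge_pos_def: "pos_def Q \<Longrightarrow> loewner_ge P Q \<Longrightarrow> pos_def P"
  unfolding loewner_ge_def using pos_def_add_pos_semidef[of Q "P - Q"] by simp

lemma loewner_ge_add_cancel: "loewner_ge (X + E) (Y + E) \<longleftrightarrow> loewner_ge X Y"
  by (simp add: loewner_ge_def)

lemma loewner_ge_congruence:
  "loewner_ge X Y \<Longrightarrow> loewner_ge (A ** X ** transpose A) (A ** Y ** transpose A)"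
  unfolding loewner_ge_def by (metis congruence_diff pos_semidef_congruence)

lemma loewner_ge_matrix_inv:
  fixes X Y :: "real^'n^'n"
  assumes Y: "pos_def Y" and XY: "loewner_ge X Y"
  shows "loewner_ge (matrix_inv Y) (matrix_inv X)"
  unfolding loewner_ge_def pos_semidef_def
proof (intro conjI allI)
  have X: "pos_def X" using loewner_ge_pos_def Y XY by blast
  have invX: "invertible X" and invY: "invertible Y" and symX: "sym_mat X" and symY: "sym_mat Y"
    using X Y pos_def_invertible pos_def_def by blast+
  then show "sym_mat (matrix_inv Y - matrix_inv X)"
    by (simp add: sym_mat_diff sym_mat_matrix_inv)
  fix x :: "real^'n"
  define z where "z = matrix_inv X *v x"
  define w where "w = matrix_inv Y *v x"
  have Xz: "X *v z = x"
    unfolding z_def by (simp add: matrix_vector_mul_assoc matrix_inv_right[OF invX])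
  have Yw: "Y *v w = x"
    unfolding w_def by (simp add: matrix_vector_mul_assoc matrix_inv_right[OF invY])
  have "inner z (Y *v z) \<le> inner z (X *v z)"
    using XY unfolding loewner_ge_def pos_semidef_def
    by (metis diff_ge_0_iff_ge inner_diff_right matrix_vector_mult_diff_rdistrib)
  moreover have "0 \<le> inner (z - w) (Y *v (z - w))"
    using Y pos_def_imp_pos_semidef pos_semidef_def by blast
  moreover have "inner (z - w) (Y *v (z - w)) = inner z (Y *v z) - 2 * inner x z + inner w x"
    using sym_mat_inner[OF symY, of w z] Yw
    by (simp add: matrix_vector_mult_diff_distrib inner_diff_left inner_diff_right inner_commute)
  moreover have "inner x z = inner z (X *v z)"
    using Xz by (simp add: inner_commute)
  ultimately have "inner z (X *v z) \<le> inner w x" by linarith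
  then show "0 \<le> inner x ((matrix_inv Y - matrix_inv X) *v x)"
    using Xz z_def w_def by (simp add: matrix_vector_mult_diff_rdistrib inner_diff_right inner_commute)
qed

section \<open>Spectral theorem for symmetric matrices\<close>

lemma nonpos_if_le_quadratic:
  fixes a b :: real
  assumes "\<And>s. 0 < s \<Longrightarrow> a * s \<le> b * s\<^sup>2"
  shows "a \<le> 0"
proof (rule ccontr)
  assume "\<not> a \<le> 0"
  define s where "s = a / (\<bar>b\<bar> + 1)"
  have "0 < s" using \<open>\<not> a \<le> 0\<close> by (simp add: s_def add_pos_nonneg)
  then have "a \<le> b * s" using assms[of s] by (simp add: power2_eq_square)
  also have "\<dots> < a" using \<open>\<not> a \<le> 0\<close> by (simp add: s_def field_simps) (smt (verit) mult_left_mono)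
  finally show False by simp
qed

text \<open>Perturbing the maximiser along its own defect \<open>w\<close> gives a second-order bound on a
  first-order quantity, which forces \<open>w = 0\<close>.\<close>

lemma rayleigh_maximizer_eigenvector:
  fixes P :: "real^'n^'n"
  assumes sym: "sym_mat P" and V: "subspace V" and inv: "\<And>x. x \<in> V \<Longrightarrow> P *v x \<in> V"
    and u: "u \<in> V" and max: "\<And>x. x \<in> V \<Longrightarrow> inner x (P *v x) \<le> \<mu> * inner x x"
    and \<mu>: "inner u (P *v u) = \<mu> * inner u u"
  shows "P *v u = \<mu> *\<^sub>R u"
proof -
  define w where "w = P *v u - \<mu> *\<^sub>R u"
  have "w \<in> V" unfolding w_def using u inv V by (simp add: subspace_diff subspace_scale)
  have "2 * inner w w * s \<le> (\<mu> * inner w w - inner w (P *v w)) * s\<^sup>2" if "0 < s" for s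
  proof -
    have "u + s *\<^sub>R w \<in> V" using u \<open>w \<in> V\<close> V by (simp add: subspace_add subspace_scale)
    then have "inner (u + s *\<^sub>R w) (P *v (u + s *\<^sub>R w))
        \<le> \<mu> * inner (u + s *\<^sub>R w) (u + s *\<^sub>R w)" by (rule max)
    moreover have "inner w (P *v u) - \<mu> * inner u w = inner w w"
      unfolding w_def by (simp add: inner_diff_left inner_commute algebra_simps)
    ultimately show ?thesis
      using \<mu> sym_mat_inner[OF sym, of u w]
      by (simp add: matrix_vector_right_distrib matrix_vector_mult_scaleR inner_add_left
          inner_add_right power2_eq_square inner_commute algebra_simps)
  qed
  then have "2 * inner w w \<le> 0" by (rule nonpos_if_le_quadratic)
  then have "inner w w = 0" using inner_ge_zero[of w] by linarith
  then show ?thesis unfolding w_def by simp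
qed

lemma sym_mat_eigenvector_in_invariant_subspace:
  fixes P :: "real^'n^'n"
  assumes sym: "sym_mat P" and V: "subspace V" and "V \<noteq> {0}"
    and inv: "\<And>x. x \<in> V \<Longrightarrow> P *v x \<in> V"
  obtains u l where "u \<in> V" "norm u = 1" "P *v u = l *\<^sub>R u"
proof -
  define f where "f x = inner x (P *v x)" for x :: "real^'n"
  define K where "K = V \<inter> sphere 0 1"
  have "compact K" unfolding K_def using closed_subspace[OF V] by (simp add: closed_Int_compact)
  obtain x0 where "x0 \<in> V" "x0 \<noteq> 0" using \<open>V \<noteq> {0}\<close> subspace_0[OF V] by blast
  then have "x0 /\<^sub>R norm x0 \<in> K" unfolding K_def using V by (simp add: subspace_scale)
  moreover have "continuous_on K f"
    unfolding f_def by (intro continuous_intros linear_continuous_on linear_linear) simp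
  ultimately obtain u where "u \<in> K" and umax: "\<And>y. y \<in> K \<Longrightarrow> f y \<le> f u"
    using continuous_attains_sup[OF \<open>compact K\<close>] by blast
  then have "u \<in> V" and "norm u = 1" unfolding K_def by auto
  have "f x \<le> f u * inner x x" if "x \<in> V" for x
  proof (cases "x = 0")
    case False
    then have "x /\<^sub>R norm x \<in> K" unfolding K_def using that V by (simp add: subspace_scale)
    moreover have "f (x /\<^sub>R norm x) = f x / (norm x)\<^sup>2"
      by (simp add: f_def matrix_vector_mult_scaleR power2_eq_square field_simps)
    ultimately have "f x / (norm x)\<^sup>2 \<le> f u" using umax by metis
    with False show ?thesis by (simp add: divide_le_eq dot_square_norm mult.commute)
  qed (simp add: f_def)
  then have "P *v u = f u *\<^sub>R u"
    using rayleigh_maximizer_eigenvector[OF sym V inv \<open>u \<in> V\<close>, of "f u"] \<open>norm u = 1\<close>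
    unfolding f_def by (simp add: dot_square_norm)
  with \<open>u \<in> V\<close> \<open>norm u = 1\<close> show thesis by (rule that)
qed

lemma span_insert_orthogonal_complement:
  assumes V: "subspace V" and u: "u \<in> V" "norm u = 1"
    and S: "span S = V \<inter> {x. inner u x = 0}"
  shows "span (insert u S) = V"
proof
  show "span (insert u S) \<subseteq> V"
  proof (rule span_minimal)
    show "insert u S \<subseteq> V" using S u span_superset[of S] by blast
  qed (rule V)
  show "V \<subseteq> span (insert u S)"
  proof
    fix x assume "x \<in> V"
    have "x - inner u x *\<^sub>R u \<in> span S"
      using \<open>x \<in> V\<close> u V S
      by (simp add: subspace_diff subspace_scale inner_diff_right dot_square_norm)
    then have "x - inner u x *\<^sub>R u \<in> span (insert u S)"
      using span_mono[of S "insert u S"] by blast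
    moreover have "inner u x *\<^sub>R u \<in> span (insert u S)"
      by (simp add: span_base span_scale)
    ultimately show "x \<in> span (insert u S)" using span_add by fastforce
  qed
qed

lemma sym_mat_orthonormal_eigenbasis:
  fixes P :: "real^'n^'n"
  assumes sym: "sym_mat P"
  shows "subspace V \<Longrightarrow> (\<And>x. x \<in> V \<Longrightarrow> P *v x \<in> V) \<Longrightarrow>
    \<exists>S \<subseteq> V. pairwise orthogonal S \<and> (\<forall>u\<in>S. norm u = 1 \<and> (\<exists>l. P *v u = l *\<^sub>R u)) \<and> span S = V"
proof (induction "dim V" arbitrary: V rule: less_induct)
  case (less V)
  show ?case
  proof (cases "V = {0}")
    case True
    then show ?thesis by (intro exI[of _ "{}"]) auto
  next
    case False
    obtain u l where "u \<in> V" "norm u = 1" "P *v u = l *\<^sub>R u"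
      using sym_mat_eigenvector_in_invariant_subspace[OF sym less.prems(1) False less.prems(2)] .
    define W where "W = V \<inter> {x. inner u x = 0}"
    have "subspace W" unfolding W_def by (intro subspace_inter less.prems(1) subspace_hyperplane)
    moreover have "P *v x \<in> W" if "x \<in> W" for x
      using that less.prems(2) \<open>P *v u = l *\<^sub>R u\<close> sym_mat_inner[OF sym, of u x]
      unfolding W_def by auto
    moreover have "dim W < dim V"
    proof (rule dim_psubset)
      have "u \<notin> W" using \<open>norm u = 1\<close> by (auto simp: W_def dot_square_norm)
      moreover have "W \<subseteq> V" unfolding W_def by blast
      ultimately have "W \<subset> V" using \<open>u \<in> V\<close> by blast
      then show "span W \<subset> span V"
        using \<open>subspace W\<close> less.prems(1) by (metis span_eq_iff)
    qed
    ultimately obtain S' where S': "S' \<subseteq> W" "pairwise orthogonal S'"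
      "\<forall>v\<in>S'. norm v = 1 \<and> (\<exists>l. P *v v = l *\<^sub>R v)" "span S' = W"
      using less.hyps by blast
    have "span (insert u S') = V"
      using span_insert_orthogonal_complement[OF less.prems(1) \<open>u \<in> V\<close> \<open>norm u = 1\<close>] S'(4)
      unfolding W_def .
    moreover have "pairwise orthogonal (insert u S')"
      using S'(1,2) by (auto simp: pairwise_insert W_def orthogonal_def inner_commute)
    ultimately show ?thesis
      using S' \<open>u \<in> V\<close> \<open>norm u = 1\<close> \<open>P *v u = l *\<^sub>R u\<close>
      by (intro exI[of _ "insert u S'"]) (auto simp: W_def)
  qed
qed

definition diag :: "('n::finite \<Rightarrow> real) \<Rightarrow> real^'n^'n" where
  "diag d = (\<chi> i j. if i = j then d i else 0)"

theorem spectral_decomposition: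
  fixes P :: "real^'n^'n"
  assumes "sym_mat P"
  obtains Q d where "orthogonal_matrix Q" "P = Q ** diag d ** transpose Q"
proof -
  obtain S where S: "pairwise orthogonal S" "\<forall>u\<in>S. norm u = 1 \<and> (\<exists>l. P *v u = l *\<^sub>R u)"
      "span S = UNIV"
    using sym_mat_orthonormal_eigenbasis[OF assms, of UNIV] by auto
  then have "independent S" using pairwise_orthogonal_independent by force
  then have "finite S" and "card S = dim (UNIV :: (real^'n) set)"
    using finiteI_independent dim_span_eq_card_independent S(3) by metis+
  then obtain f where f: "bij_betw f (UNIV::'n set) S"
    using finite_same_card_bij[of "UNIV::'n set" S] by auto
  then have fS: "f j \<in> S" for j by (meson UNIV_I bij_betwE)
  define Q :: "real^'n^'n" where "Q = (\<chi> i j. f j $ i)"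
  have "norm (f i) = 1" for i using S(2) fS by blast
  moreover have "orthogonal (f i) (f j)" if "i \<noteq> j" for i j
  proof -
    have "f i \<noteq> f j" using f that by (auto simp: bij_betw_def inj_on_def)
    then show ?thesis using S(1) fS by (simp add: pairwise_def)
  qed
  ultimately have "orthogonal_matrix Q"
    by (simp add: orthogonal_matrix_orthonormal_columns column_def Q_def)
  have "\<forall>j. \<exists>l. P *v f j = l *\<^sub>R f j" using S(2) fS by blast
  then obtain d where d: "P *v f j = d j *\<^sub>R f j" for j by metis
  have "P ** Q = Q ** diag d"
    using d by (simp add: vec_eq_iff matrix_matrix_mult_def matrix_vector_mult_def Q_def diag_def
        if_distrib[of "\<lambda>t. _ * t"] mult.commute cong: if_cong)
  then have "P ** (Q ** transpose Q) = Q ** diag d ** transpose Q"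
    by (simp add: matrix_mul_assoc)
  then have "P = Q ** diag d ** transpose Q"
    using \<open>orthogonal_matrix Q\<close> by (simp add: orthogonal_matrix_def)
  with \<open>orthogonal_matrix Q\<close> show thesis by (rule that)
qed

section \<open>Matrices diagonalised by an orthogonal matrix\<close>

lemma diag_mult: "diag a ** diag b = diag (\<lambda>i. a i * b i)"
  by (simp add: vec_eq_iff matrix_matrix_mult_def diag_def if_distrib[of "\<lambda>t. t * _"] cong: if_cong)

lemma diag_const: "diag (\<lambda>_. a) = mat a"
  by (simp add: vec_eq_iff diag_def mat_def)

lemma diag_diff_scaleR: "diag a - k *\<^sub>R diag b = diag (\<lambda>i. a i - k * b i)"
  by (simp add: vec_eq_iff diag_def)

lemma diag_matrix_vector: "diag e *v w = (\<chi> i. e i * w $ i)"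
  by (simp add: vec_eq_iff matrix_vector_mult_def diag_def if_distrib[of "\<lambda>t. t * _"] cong: if_cong)

lemma orthogonal_matrix_transpose_cancel:
  "orthogonal_matrix Q \<Longrightarrow> transpose Q *v (Q *v x) = x"
  "orthogonal_matrix Q \<Longrightarrow> Q *v (transpose Q *v x) = x"
  by (simp_all add: matrix_vector_mul_assoc orthogonal_matrix_def)

lemma orthogonal_congruence_diff_scaleR:
  fixes Q :: "real^'n^'m" and X Y :: "real^'n^'n"
  shows "Q ** X ** transpose Q - k *\<^sub>R (Q ** Y ** transpose Q) = Q ** (X - k *\<^sub>R Y) ** transpose Q"
  by (simp add: congruence_diff matrix_scalar_ac scalar_matrix_assoc[symmetric])

lemma inner_orthogonal_diag:
  "inner x ((Q ** diag e ** transpose Q) *v x) = (\<Sum>i\<in>UNIV. e i * ((transpose Q *v x) $ i)\<^sup>2)"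
  unfolding inner_congruence by (simp add: diag_matrix_vector inner_vec_def power2_eq_square mult_ac)

lemma eigenvalues_orthogonal_diag:
  assumes Q: "orthogonal_matrix Q"
  shows "{l. \<exists>v. v \<noteq> 0 \<and> (Q ** diag d ** transpose Q) *v v = l *\<^sub>R v} = range d"
proof (intro equalityI subsetI)
  fix l assume "l \<in> {l. \<exists>v. v \<noteq> 0 \<and> (Q ** diag d ** transpose Q) *v v = l *\<^sub>R v}"
  then obtain v where v: "v \<noteq> 0" "(Q ** diag d ** transpose Q) *v v = l *\<^sub>R v" by blast
  define w where "w = transpose Q *v v"
  have "w \<noteq> 0" using v(1) orthogonal_matrix_transpose_cancel(2)[OF Q, of v] w_def by auto
  then obtain i where "w $ i \<noteq> 0" by (auto simp: vec_eq_iff)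
  have "diag d *v w = transpose Q *v ((Q ** diag d ** transpose Q) *v v)"
    using Q unfolding w_def orthogonal_matrix_def
    by (simp only: matrix_vector_mul_assoc matrix_mul_assoc matrix_mul_lid)
  also have "\<dots> = l *\<^sub>R w" by (simp add: v(2) w_def matrix_vector_mult_scaleR)
  finally have "d i * w $ i = l * w $ i" by (simp add: vec_eq_iff diag_matrix_vector)
  with \<open>w $ i \<noteq> 0\<close> have "l = d i" by simp
  then show "l \<in> range d" by simp
next
  fix l assume "l \<in> range d"
  then obtain i where "l = d i" by blast
  define v where "v = Q *v axis i 1"
  have "v \<noteq> 0"
    using orthogonal_matrix_transpose_cancel(1)[OF Q, of "axis i 1"] v_def
    by (metis axis_eq_0_iff matrix_vector_mult_0_right zero_neq_one)
  moreover have "(Q ** diag d ** transpose Q) *v v = l *\<^sub>R v"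
  proof -
    have "diag d *v axis i 1 = d i *\<^sub>R axis i 1"
      by (simp add: diag_matrix_vector axis_def vec_eq_iff)
    then have "(Q ** diag d ** transpose Q) *v v = Q *v (d i *\<^sub>R axis i 1)"
      using orthogonal_matrix_transpose_cancel(1)[OF Q, of "axis i 1"]
      by (simp only: v_def flip: matrix_vector_mul_assoc)
    then show ?thesis by (simp add: v_def matrix_vector_mult_scaleR \<open>l = d i\<close>)
  qed
  ultimately show "l \<in> {l. \<exists>v. v \<noteq> 0 \<and> (Q ** diag d ** transpose Q) *v v = l *\<^sub>R v}" by blast
qed

lemma pos_def_orthogonal_diag_iff:
  fixes Q :: "real^'n^'n"
  assumes Q: "orthogonal_matrix Q"
  shows "pos_def (Q ** diag e ** transpose Q) \<longleftrightarrow> (\<forall>i. 0 < e i)"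
proof
  assume pd: "pos_def (Q ** diag e ** transpose Q)"
  show "\<forall>i. 0 < e i"
  proof
    fix i
    have "Q *v axis i 1 \<noteq> 0"
      using orthogonal_matrix_transpose_cancel(1)[OF Q, of "axis i 1"]
      by (metis axis_eq_0_iff matrix_vector_mult_0_right zero_neq_one)
    then have "0 < inner (Q *v axis i 1) ((Q ** diag e ** transpose Q) *v (Q *v axis i 1))"
      using pd pos_def_def by blast
    also have "\<dots> = (\<Sum>k\<in>UNIV. e k * (axis i 1 $ k)\<^sup>2)"
      unfolding inner_orthogonal_diag orthogonal_matrix_transpose_cancel(1)[OF Q] ..
    also have "\<dots> = (\<Sum>k\<in>UNIV. if k = i then e i else 0)"
      by (rule sum.cong) (auto simp: axis_def)
    also have "\<dots> = e i" by simp
    finally show "0 < e i" .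
  qed
next
  assume e: "\<forall>i. 0 < e i"
  show "pos_def (Q ** diag e ** transpose Q)"
    unfolding pos_def_def
  proof (intro conjI allI impI)
    show "sym_mat (Q ** diag e ** transpose Q)"
      by (intro sym_mat_congruence) (simp add: sym_mat_def transpose_def diag_def vec_eq_iff)
    fix x :: "real^'n" assume "x \<noteq> 0"
    then have "transpose Q *v x \<noteq> 0"
      using orthogonal_matrix_transpose_cancel(2)[OF Q, of x] by auto
    then obtain i where "(transpose Q *v x) $ i \<noteq> 0" by (auto simp: vec_eq_iff)
    then have "0 < (\<Sum>k\<in>UNIV. e k * ((transpose Q *v x) $ k)\<^sup>2)"
      using e by (intro sum_pos2[of UNIV i]) (simp_all add: less_imp_le)
    then show "0 < inner x ((Q ** diag e ** transpose Q) *v x)"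
      by (simp add: inner_orthogonal_diag)
  qed
qed

lemma det_orthogonal_diag:
  "orthogonal_matrix Q \<Longrightarrow> det (Q ** diag e ** transpose Q) = (\<Prod>i\<in>UNIV. e i)"
  using det_mul[of Q "transpose Q"]
  by (simp add: det_mul det_diagonal diag_def orthogonal_matrix_def)

lemma trace_orthogonal_diag:
  assumes "orthogonal_matrix Q"
  shows "trace (Q ** diag e ** transpose Q) = (\<Sum>i\<in>UNIV. e i)"
proof -
  have "trace (Q ** diag e ** transpose Q) = trace (transpose Q ** (Q ** diag e))"
    by (rule trace_mul_sym)
  also have "\<dots> = trace (diag e)"
    using assms by (simp add: matrix_mul_assoc orthogonal_matrix_def)
  finally show ?thesis by (simp add: trace_def diag_def)
qed

lemma matrix_inv_orthogonal_diag:
  assumes Q: "orthogonal_matrix Q" and e: "\<And>i. e i \<noteq> 0"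
  shows "matrix_inv (Q ** diag e ** transpose Q) = Q ** diag (\<lambda>i. 1 / e i) ** transpose Q"
proof (rule matrix_inv_unique)
  have "(Q ** diag e ** transpose Q) ** (Q ** diag (\<lambda>i. 1 / e i) ** transpose Q)
      = Q ** diag e ** (transpose Q ** Q) ** diag (\<lambda>i. 1 / e i) ** transpose Q"
    by (simp add: matrix_mul_assoc)
  also have "\<dots> = mat 1"
    using Q e by (simp add: orthogonal_matrix_def matrix_mul_assoc[symmetric] diag_mult diag_const)
  finally show "(Q ** diag e ** transpose Q) ** (Q ** diag (\<lambda>i. 1 / e i) ** transpose Q) = mat 1" .
qed

lemma orthogonal_diag_one: "orthogonal_matrix Q \<Longrightarrow> Q ** diag (\<lambda>_. 1) ** transpose Q = mat 1"
  by (simp add: diag_const orthogonal_matrix_def)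

lemma lambda_max_orthogonal_diag:
  "orthogonal_matrix Q \<Longrightarrow> lambda_max (Q ** diag d ** transpose Q) = Max (range d)"
  unfolding lambda_max_def by (simp add: eigenvalues_orthogonal_diag)

lemma pos_def_matrix_inv_diff_scaled_id:
  fixes P :: "real^'n^'n"
  assumes P: "pos_def P" and \<theta>: "\<theta> < inverse (lambda_max P)"
  shows "pos_def (matrix_inv P - \<theta> *\<^sub>R mat 1)"
proof -
  obtain Q d where Q: "orthogonal_matrix Q" and P_eq: "P = Q ** diag d ** transpose Q"
    using spectral_decomposition P pos_def_def by blast
  have d: "0 < d i" for i using P Q P_eq pos_def_orthogonal_diag_iff by blast
  have "\<theta> < 1 / d i" for i
  proof -
    have "lambda_max P = Max (range d)" using lambda_max_orthogonal_diag[OF Q] P_eq by simp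
    moreover have "d i \<le> Max (range d)" by simp
    ultimately have "inverse (lambda_max P) \<le> inverse (d i)"
      using d[of i] by (metis le_imp_inverse_le)
    with \<theta> show ?thesis by (simp add: inverse_eq_divide)
  qed
  moreover have "matrix_inv P - \<theta> *\<^sub>R mat 1 = Q ** diag (\<lambda>i. 1 / d i - \<theta> * 1) ** transpose Q"
    using d Q unfolding P_eq
    by (simp add: matrix_inv_orthogonal_diag orthogonal_diag_one[symmetric]
        orthogonal_congruence_diff_scaleR diag_diff_scaleR less_imp_neq[symmetric]
        del: diag_const)
  ultimately show ?thesis by (simp add: pos_def_orthogonal_diag_iff[OF Q])
qed

section \<open>The risk-sensitivity parameter\<close>

definition scalar_gamma :: "real \<Rightarrow> real" where
  "scalar_gamma x = ln (1 - x) + 1 / (1 - x) - 1"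

lemma scalar_gamma_0: "scalar_gamma 0 = 0"
  by (simp add: scalar_gamma_def)

lemma scalar_gamma_eq: "x < 1 \<Longrightarrow> scalar_gamma x = 1 / (1 - x) - ln (1 / (1 - x)) - 1"
  by (simp add: scalar_gamma_def ln_div)

lemma diff_ln_strict_mono:
  fixes a b :: real
  assumes "1 \<le> a" and "a < b"
  shows "a - ln a < b - ln b"
proof -
  have "ln b - ln a = ln (b / a)" using assms by (simp add: ln_div)
  also have "\<dots> < b / a - 1"
    using assms ln_le_minus_one[of "b / a"] ln_eq_minus_one[of "b / a"] by fastforce
  also have "\<dots> = (b - a) / a" using assms by (simp add: field_simps)
  also have "\<dots> \<le> b - a" using assms by (simp add: divide_le_eq)
  finally show ?thesis by simp
qed

lemma scalar_gamma_strict_mono: "0 \<le> x \<Longrightarrow> x < y \<Longrightarrow> y < 1 \<Longrightarrow> scalar_gamma x < scalar_gamma y"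
  using diff_ln_strict_mono[of "1 / (1 - x)" "1 / (1 - y)"]
  by (simp add: scalar_gamma_eq frac_less2)

lemma scalar_gamma_nonneg: "0 \<le> x \<Longrightarrow> x < 1 \<Longrightarrow> 0 \<le> scalar_gamma x"
  using scalar_gamma_strict_mono[of 0 x] scalar_gamma_0 by (cases "x = 0") auto

lemma scalar_gamma_lower_bound:
  assumes "1 \<le> y"
  shows "y / 2 - 1 \<le> scalar_gamma (1 - 1 / y)"
proof -
  have "ln y = ln 2 + ln (y / 2)" using assms by (simp add: ln_div)
  also have "\<dots> \<le> ln 2 + (y / 2 - 1)" using ln_le_minus_one[of "y / 2"] assms by simp
  finally have "ln y \<le> y / 2" using ln_2_less_1 by simp
  then show ?thesis using assms by (simp add: scalar_gamma_eq)
qed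

lemma gamma_orthogonal_diag:
  assumes Q: "orthogonal_matrix Q" and lt: "\<And>i. \<theta> * d i < 1"
  shows "gamma \<theta> (Q ** diag d ** transpose Q) = 1/2 * (\<Sum>i\<in>UNIV. scalar_gamma (\<theta> * d i))"
proof -
  have nz: "1 - \<theta> * d i \<noteq> 0" for i using lt[of i] by simp
  have M: "mat 1 - \<theta> *\<^sub>R (Q ** diag d ** transpose Q) = Q ** diag (\<lambda>i. 1 - \<theta> * d i) ** transpose Q"
    using Q by (simp add: orthogonal_diag_one[symmetric] orthogonal_congruence_diff_scaleR
        diag_diff_scaleR del: diag_const)
  have "ln (det (mat 1 - \<theta> *\<^sub>R (Q ** diag d ** transpose Q))) = (\<Sum>i\<in>UNIV. ln (1 - \<theta> * d i))"
    using lt by (simp add: M det_orthogonal_diag[OF Q] ln_prod less_imp_neq)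
  moreover have "trace (matrix_inv (mat 1 - \<theta> *\<^sub>R (Q ** diag d ** transpose Q)))
      = (\<Sum>i\<in>UNIV. 1 / (1 - \<theta> * d i))"
    by (simp add: M matrix_inv_orthogonal_diag[OF Q nz] trace_orthogonal_diag[OF Q])
  ultimately show ?thesis
    by (simp add: gamma_def scalar_gamma_def sum.distrib sum_subtractf)
qed

lemma mult_less_one_if_less_inverse_Max:
  fixes d :: "'n::finite \<Rightarrow> real"
  assumes d: "\<And>i. 0 < d i" and \<theta>: "0 \<le> \<theta>" "\<theta> < inverse (Max (range d))"
  shows "\<theta> * d i < 1"
proof -
  have "d i \<le> Max (range d)" by simp
  with d[of i] have "0 < Max (range d)" by linarith
  have "\<theta> * d i \<le> \<theta> * Max (range d)" using \<theta> by (simp add: mult_left_mono)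
  also have "\<dots> < 1" using \<theta> \<open>0 < Max (range d)\<close> by (simp add: field_simps)
  finally show ?thesis .
qed

lemma ex1_sum_scalar_gamma_eq:
  fixes d :: "'n::finite \<Rightarrow> real"
  assumes d: "\<And>i. 0 < d i" and c: "0 < c"
  shows "\<exists>!\<theta>. 0 < \<theta> \<and> \<theta> < inverse (Max (range d)) \<and>
    1/2 * (\<Sum>i\<in>UNIV. scalar_gamma (\<theta> * d i)) = c"
proof -
  define L where "L = Max (range d)"
  define G where "G \<theta> = 1/2 * (\<Sum>i\<in>UNIV. scalar_gamma (\<theta> * d i))" for \<theta>
  have "L \<in> range d" unfolding L_def by (rule Max_in) auto
  then obtain i0 where i0: "d i0 = L" by auto
  have "0 < L" using d[of i0] i0 by simp
  have lt1: "\<theta> * d i < 1" if "0 \<le> \<theta>" "\<theta> < inverse L" for \<theta> i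
    using mult_less_one_if_less_inverse_Max[OF d that[unfolded L_def]] .
  have G_mono: "G a < G b" if "0 \<le> a" "a < b" "b < inverse L" for a b
    unfolding G_def using that d lt1[of b] 
    by (simp add: sum_strict_mono scalar_gamma_strict_mono mult_strict_right_mono less_imp_le)
  define \<theta>2 where "\<theta>2 = (1 - 1 / (4 * c + 2)) / L"
  have "0 < 1 - 1 / (4 * c + 2)" "1 - 1 / (4 * c + 2) < 1" using c by simp_all
  then have \<theta>2: "0 < \<theta>2" "\<theta>2 < inverse L"
    using \<open>0 < L\<close> by (simp_all add: \<theta>2_def divide_strict_right_mono inverse_eq_divide)
  have "c \<le> G \<theta>2"
  proof -
    have "\<theta>2 * d i0 = 1 - 1 / (4 * c + 2)" using \<open>0 < L\<close> by (simp add: \<theta>2_def i0)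
    moreover have "(4 * c + 2) / 2 - 1 = 2 * c" by (simp add: field_simps)
    ultimately have "2 * c \<le> scalar_gamma (\<theta>2 * d i0)"
      using scalar_gamma_lower_bound[of "4 * c + 2"] c by simp
    also have "\<dots> \<le> (\<Sum>i\<in>UNIV. scalar_gamma (\<theta>2 * d i))"
      using \<theta>2 d lt1 by (intro member_le_sum) (simp_all add: scalar_gamma_nonneg less_imp_le)
    finally show ?thesis by (simp add: G_def)
  qed
  moreover have "continuous_on {0..\<theta>2} G"
  proof -
    have "1 - \<theta> * d i \<noteq> 0" if "\<theta> \<in> {0..\<theta>2}" for \<theta> i
      using lt1[of \<theta> i] that \<theta>2 by auto
    then show ?thesis unfolding G_def scalar_gamma_def by (intro continuous_intros) auto
  qed
  moreover have "G 0 = 0" by (simp add: G_def scalar_gamma_0)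
  ultimately obtain \<theta>1 where \<theta>1: "0 \<le> \<theta>1" "\<theta>1 \<le> \<theta>2" "G \<theta>1 = c"
    using IVT'[of G 0 c \<theta>2] c \<theta>2 by auto
  with c \<open>G 0 = 0\<close> have "0 < \<theta>1" by (auto simp: less_le)
  show ?thesis
    unfolding G_def[symmetric] L_def[symmetric]
  proof (rule ex1I[of _ \<theta>1])
    show "0 < \<theta>1 \<and> \<theta>1 < inverse L \<and> G \<theta>1 = c"
      using \<open>0 < \<theta>1\<close> \<theta>1 \<theta>2 by simp
    fix \<theta> assume \<theta>: "0 < \<theta> \<and> \<theta> < inverse L \<and> G \<theta> = c"
    show "\<theta> = \<theta>1"
    proof (rule ccontr)
      assume "\<theta> \<noteq> \<theta>1"
      then consider "\<theta> < \<theta>1" | "\<theta>1 < \<theta>" by linarith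
      then show False
        using G_mono[of \<theta> \<theta>1] G_mono[of \<theta>1 \<theta>] \<theta> \<theta>1 \<theta>2 \<open>0 < \<theta>1\<close> by cases auto
    qed
  qed
qed

theorem theta_c_spec:
  fixes P :: "real^'n^'n"
  assumes P: "pos_def P" and c: "0 < c"
  shows "0 < theta_c c P \<and> theta_c c P < inverse (lambda_max P) \<and> gamma (theta_c c P) P = c"
proof -
  obtain Q d where Q: "orthogonal_matrix Q" and P_eq: "P = Q ** diag d ** transpose Q"
    using spectral_decomposition P pos_def_def by blast
  have d: "0 < d i" for i using P Q P_eq pos_def_orthogonal_diag_iff by blast
  have L: "lambda_max P = Max (range d)" using lambda_max_orthogonal_diag[OF Q] P_eq by simp
  have gamma_eq: "gamma \<theta> P = 1/2 * (\<Sum>i\<in>UNIV. scalar_gamma (\<theta> * d i))"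
    if "0 < \<theta>" "\<theta> < inverse (Max (range d))" for \<theta>
    using gamma_orthogonal_diag[OF Q, of \<theta> d] mult_less_one_if_less_inverse_Max[of d \<theta>] d that P_eq
    by simp
  have "0 < \<theta> \<and> \<theta> < inverse (lambda_max P) \<and> gamma \<theta> P = c \<longleftrightarrow>
      0 < \<theta> \<and> \<theta> < inverse (Max (range d)) \<and> 1/2 * (\<Sum>i\<in>UNIV. scalar_gamma (\<theta> * d i)) = c"
    for \<theta> by (metis L gamma_eq)
  then have "\<exists>!\<theta>. 0 < \<theta> \<and> \<theta> < inverse (lambda_max P) \<and> gamma \<theta> P = c"
    using ex1_sum_scalar_gamma_eq[OF d c] by simp
  then show ?thesis unfolding theta_c_def by (rule theI')
qed

section \<open>Comparison of the Riccati maps\<close>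

lemma pos_semidef_transpose_matrix_inv:
  "pos_def R \<Longrightarrow> pos_semidef (transpose C ** matrix_inv R ** C)"
  using pos_semidef_congruence[of "matrix_inv R" "transpose C"]
  by (simp add: pos_def_imp_pos_semidef pos_def_matrix_inv)

lemma loewner_ge_riccati_BBt:
  assumes P: "pos_def P" and R: "pos_def (D ** transpose D)"
  shows "loewner_ge (riccati A B C D P) (B ** transpose B)"
proof -
  have "pos_def (matrix_inv P + transpose C ** matrix_inv (D ** transpose D) ** C)"
    using P R by (simp add: pos_def_add_pos_semidef pos_def_matrix_inv pos_semidef_transpose_matrix_inv)
  then show ?thesis
    unfolding loewner_ge_def riccati_def
    by (simp add: pos_semidef_congruence pos_def_imp_pos_semidef pos_def_matrix_inv)
qed

lemma riccati_mono:
  assumes Q: "pos_def Q" and PQ: "loewner_ge P Q" and R: "pos_def (D ** transpose D)"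
  shows "loewner_ge (riccati A B C D P) (riccati A B C D Q)"
proof -
  define S where "S = transpose C ** matrix_inv (D ** transpose D) ** C"
  have S: "pos_semidef S" using R pos_semidef_transpose_matrix_inv S_def by blast
  have "pos_def (matrix_inv P + S)"
    using loewner_ge_pos_def[OF Q PQ] S by (simp add: pos_def_add_pos_semidef pos_def_matrix_inv)
  moreover have "loewner_ge (matrix_inv Q + S) (matrix_inv P + S)"
    using loewner_ge_matrix_inv[OF Q PQ] by (simp add: loewner_ge_add_cancel)
  ultimately have "loewner_ge (matrix_inv (matrix_inv P + S)) (matrix_inv (matrix_inv Q + S))"
    by (rule loewner_ge_matrix_inv)
  then show ?thesis
    unfolding riccati_def S_def[symmetric] by (simp add: loewner_ge_add_cancel loewner_ge_congruence)
qed

text \<open>Subtracting \<open>\<theta>_c(P) I\<close> keeps the information matrix positive definite because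
  \<open>\<theta>_c(P) < \<lambda>\<^sub>1(P)\<^sup>-\<^sup>1\<close>, and then enlarges its inverse.\<close>

lemma riccati_R_ge_riccati:
  assumes P: "pos_def P" and c: "0 < c" and R: "pos_def (D ** transpose D)"
  shows "loewner_ge (riccati_R c A B C D P) (riccati A B C D P)"
proof -
  define S where "S = transpose C ** matrix_inv (D ** transpose D) ** C"
  define \<theta> where "\<theta> = theta_c c P"
  have "0 < \<theta>" and "pos_def (matrix_inv P - \<theta> *\<^sub>R mat 1)"
    using theta_c_spec[OF P c] pos_def_matrix_inv_diff_scaled_id[OF P] unfolding \<theta>_def by auto
  then have "pos_def (matrix_inv P + S - \<theta> *\<^sub>R mat 1)"
    using pos_def_add_pos_semidef pos_semidef_transpose_matrix_inv[OF R] unfolding S_def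
    by (metis add_diff_eq diff_add_eq)
  moreover have "loewner_ge (matrix_inv P + S) (matrix_inv P + S - \<theta> *\<^sub>R mat 1)"
    using \<open>0 < \<theta>\<close> by (simp add: loewner_ge_def pos_semidef_scaled_id)
  ultimately have "loewner_ge (matrix_inv (matrix_inv P + S - \<theta> *\<^sub>R mat 1)) (matrix_inv (matrix_inv P + S))"
    by (rule loewner_ge_matrix_inv)
  then show ?thesis
    unfolding riccati_R_def riccati_def S_def[symmetric] \<theta>_def[symmetric]
    by (simp add: loewner_ge_add_cancel loewner_ge_congruence)
qed

lemma loewner_ge_riccati_R_BBt:
  assumes P: "pos_def P" and c: "0 < c" and R: "pos_def (D ** transpose D)"
  shows "loewner_ge (riccati_R c A B C D P) (B ** transpose B)"
  using loewner_ge_trans[OF riccati_R_ge_riccati[OF P c R] loewner_ge_riccati_BBt[OF P R]] .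

theorem lemma4:
  fixes A :: "real^'n^'n" and B :: "real^'m^'n" and C :: "real^'n^'p" and D :: "real^'p^'p"
    and c :: real and P0 :: "real^'n^'n" and Pt :: "nat \<Rightarrow> real^'n^'n"
    and Pbar :: "nat \<Rightarrow> real^'n^'n"
  assumes "reachable A B" and "observable C A"
    and "pos_def (B ** transpose B)" and "pos_def (D ** transpose D)"
    and "c > 0"
    and "Pbar 0 = B ** transpose B"
    and "\<And>t. Pbar (Suc t) = riccati A B C D (Pbar t)"
    and "pos_def (Pt 0)" and "loewner_ge (Pt 0) (B ** transpose B)"
    and "\<And>t. Pt (Suc t) = riccati_R c A B C D (Pt t)"
  shows "\<forall>q t. q \<le> t \<longrightarrow> loewner_ge (Pt t) (Pbar q)"
proof -
  note BB = assms(3) and R = assms(4) and c = assms(5)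
    and Pbar_0 = assms(6) and Pbar_Suc = assms(7) and Pt_Suc = assms(10)
  have Pt: "pos_def (Pt t) \<and> loewner_ge (Pt t) (B ** transpose B)" for t
  proof (induction t)
    case (Suc t)
    then have "loewner_ge (Pt (Suc t)) (B ** transpose B)"
      using loewner_ge_riccati_R_BBt[OF conjunct1[OF Suc] c R] Pt_Suc by simp
    then show ?case using loewner_ge_pos_def[OF BB] by blast
  qed (use assms(8,9) in blast)
  have Pbar: "pos_def (Pbar q)" for q
  proof (induction q)
    case (Suc q)
    then show ?case
      using loewner_ge_pos_def[OF BB loewner_ge_riccati_BBt[OF _ R]] Pbar_Suc by simp
  qed (use BB Pbar_0 in simp)
  have "loewner_ge (Pt t) (Pbar q)" if "q \<le> t" for q t
    using that
  proof (induction q arbitrary: t)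
    case 0
    then show ?case using Pt Pbar_0 by simp
  next
    case (Suc q)
    then obtain t' where t: "t = Suc t'" "q \<le> t'" by (cases t) auto
    have "loewner_ge (Pt t) (riccati A B C D (Pt t'))"
      using riccati_R_ge_riccati[OF conjunct1[OF Pt[of t']] c R] Pt_Suc t(1) by simp
    moreover have "loewner_ge (riccati A B C D (Pt t')) (Pbar (Suc q))"
      using riccati_mono[OF Pbar Suc.IH[OF t(2)] R] Pbar_Suc by simp
    ultimately show ?case by (rule loewner_ge_trans)
  qed
  then show ?thesis by blast
qed

end
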